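(* For every Bochvar algebra $\mathbf{A}$, the Bochvar algebra $\mathbf{A}_{\mathbb{B}_{\mathbf{A}}}$ is isomorphic to $\mathbf{A}$.
   Context: $\mathbf{WK}^e$ is the three-element algebra on $\{0,\tfrac12,1\}$ of type $\langle\wedge,\vee,\neg,J_2,0,1\rangle$. Its operations are: - $\neg$ swaps $0,1$ and fixes $\tfrac12$; - $\wedge,\vee$ are Boolean on $\{0,1\}$ and return $\tfrac12$ if some argument is $\tfrac12$; - $J_2(1)=1$ and $J_2(\tfrac12)=J_2(0)=0$. Bochvar algebras are the members of $ISP(\mathbf{WK}^e)$. The $\{\wedge,\vee,\neg,0,1\}$-reduct of a Bochvar algebra is canonically a Płonka sum of Boolean algebras $\mathbf{A}_i$ over a join-semilattice $\langle I,\vee,i_0\rangle$, with bottom fibre $\mathbf{A}_{i_0}$. A Bochvar system is a pair $\langle\mathbf{B},\mathbf{I}\rangle$ with $\mathbf{B}$ a Boolean algebra and $I\subseteq B$ containing $1$ and closed under $\wedge$. $\mathbb{B}_{\mathbf{A}}$ is the Bochvar system $\langle\mathbf{A}_{i_0},K\rangle$ with $K=\{J_2(1^{A_i}):i\in I\}$, where $1^{A_i}$ is the top of fibre $\mathbf{A}_i$. For a Bochvar system $\mathbb{B}=\langle\mathbf{B},\mathbf{I}\rangle$, $\mathbf{A}_{\mathbb{B}}$ is the unique Bochvar algebra whose $\{\wedge,\vee,\neg,0,1\}$-reduct is the Płonka sum of the following system: - index semilattice $I$ ordered dually to $\mathbf{B}$ (least element $1$); - fibres $\mathbf{B}/[i)$,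 the quotient by the congruence of the principal filter $[i)$; - maps $p_{ij}(a/[i))=a/[j)$. Its $J_2$ sends $a/[i)$ to the unique element of the bottom fibre $\mathbf{B}/[1)\cong\mathbf{B}$ below $i$ that is congruent to $a$ modulo $[i)$. *)

theory Defs
  imports Main
begin

datatype wk = WZ | WH | WO   (* 0, 1/2, 1 *)

fun wk_neg :: "wk \<Rightarrow> wk" where
  "wk_neg WZ = WO" | "wk_neg WO = WZ" | "wk_neg WH = WH"

fun wk_meet :: "wk \<Rightarrow> wk \<Rightarrow> wk" where
  "wk_meet WH _ = WH" | "wk_meet _ WH = WH"
| "wk_meet WO WO = WO" | "wk_meet _ _ = WZ"

fun wk_join :: "wk \<Rightarrow> wk \<Rightarrow> wk" where
  "wk_join WH _ = WH" | "wk_join _ WH = WH"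
| "wk_join WZ WZ = WZ" | "wk_join _ _ = WO"

fun wk_J2 :: "wk \<Rightarrow> wk" where
  "wk_J2 WO = WO" | "wk_J2 _ = WZ"

record 'a balg =
  carrier :: "'a set"
  meet :: "'a \<Rightarrow> 'a \<Rightarrow> 'a"
  join :: "'a \<Rightarrow> 'a \<Rightarrow> 'a"
  neg :: "'a \<Rightarrow> 'a"
  jay :: "'a \<Rightarrow> 'a"
  zero :: 'a
  one :: 'a

definition is_algebra :: "'a balg \<Rightarrow> bool" where
  "is_algebra A \<longleftrightarrow> zero A \<in> carrier A \<and> one A \<in> carrier A \<and>
     (\<forall>a\<in>carrier A. \<forall>b\<in>carrier A. meet A a b \<in> carrier A \<and> join A a b \<in> carrier A) \<and>
     (\<forall>a\<in>carrier A. neg A a \<in> carrier A \<and> jay A a \<in> carrier A)"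

text \<open>An embedding of A into the power (WK^e)^X (functions compared on X only).\<close>
definition embeds_into_power :: "'a balg \<Rightarrow> 'x set \<Rightarrow> ('a \<Rightarrow> 'x \<Rightarrow> wk) \<Rightarrow> bool" where
  "embeds_into_power A X h \<longleftrightarrow>
     (\<forall>a\<in>carrier A. \<forall>b\<in>carrier A. (\<forall>x\<in>X. h a x = h b x) \<longrightarrow> a = b) \<and>
     (\<forall>a\<in>carrier A. \<forall>b\<in>carrier A. \<forall>x\<in>X.
        h (meet A a b) x = wk_meet (h a x) (h b x) \<and> h (join A a b) x = wk_join (h a x) (h b x)) \<and>
     (\<forall>a\<in>carrier A. \<forall>x\<in>X. h (neg A a) x = wk_neg (h a x) \<and> h (jay A a) x = wk_J2 (h a x)) \<and>
     (\<forall>x\<in>X. h (zero A) x = WZ \<and> h (one A) x = WO)"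

text \<open>Bochvar algebras = ISP(WK^e). An index set of type 'a => wk suffices
  (the set of all homomorphisms A -> WK^e lives there).\<close>
definition bochvar_algebra :: "'a balg \<Rightarrow> bool" where
  "bochvar_algebra A \<longleftrightarrow> is_algebra A \<and>
     (\<exists>(X :: ('a \<Rightarrow> wk) set) h. embeds_into_power A X h)"

record 'a boolalg =
  bcarrier :: "'a set"
  bmeet :: "'a \<Rightarrow> 'a \<Rightarrow> 'a"
  bjoin :: "'a \<Rightarrow> 'a \<Rightarrow> 'a"
  bneg :: "'a \<Rightarrow> 'a"
  bzero :: 'a
  bone :: 'a

type_synonym 'a bochvar_system = "'a boolalg \<times> 'a set"

text \<open>In the Plonka decomposition of the reduct, the top of the fibre containing a
  is a join (neg a); the bottom fibre is the fibre of the constants 0, 1.\<close>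
definition fibre_top :: "'a balg \<Rightarrow> 'a \<Rightarrow> 'a" where
  "fibre_top A a = join A a (neg A a)"

definition bottom_fibre :: "'a balg \<Rightarrow> 'a set" where
  "bottom_fibre A = {a \<in> carrier A. fibre_top A a = one A}"

definition system_of :: "'a balg \<Rightarrow> 'a bochvar_system" where
  "system_of A =
     (\<lparr> bcarrier = bottom_fibre A, bmeet = meet A, bjoin = join A, bneg = neg A,
        bzero = zero A, bone = one A \<rparr>,
      { jay A (fibre_top A a) | a. a \<in> carrier A })"

text \<open>Class of a modulo the principal filter [i): a ~ b iff a meet i = b meet i.\<close>
definition filt_class :: "'a boolalg \<Rightarrow> 'a \<Rightarrow> 'a \<Rightarrow> 'a set" where
  "filt_class B i a = {b \<in> bcarrier B. bmeet B b i = bmeet B a i}"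

definition rep :: "'a set \<Rightarrow> 'a" where
  "rep C = (SOME a. a \<in> C)"

text \<open>Elements are pairs (i, a/[i)). The join of indices i, j in the semilattice
  ordered dually to B is i meet j; transition maps p_ij(a/[i)) = a/[j).\<close>
definition alg_of_system :: "'a bochvar_system \<Rightarrow> ('a \<times> 'a set) balg" where
  "alg_of_system S = (let B = fst S; I = snd S in
     \<lparr> carrier = {(i, filt_class B i a) | i a. i \<in> I \<and> a \<in> bcarrier B},
       meet = (\<lambda>(i, C) (j, D). (bmeet B i j, filt_class B (bmeet B i j) (bmeet B (rep C) (rep D)))),
       join = (\<lambda>(i, C) (j, D). (bmeet B i j, filt_class B (bmeet B i j) (bjoin B (rep C) (rep D)))),
       neg = (\<lambda>(i, C). (i, filt_class B i (bneg B (rep C)))),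
       jay = (\<lambda>(i, C). (bone B, filt_class B (bone B) (bmeet B (rep C) i))),
       zero = (bone B, filt_class B (bone B) (bzero B)),
       one = (bone B, filt_class B (bone B) (bone B)) \<rparr>)"

definition is_iso :: "('a \<Rightarrow> 'b) \<Rightarrow> 'a balg \<Rightarrow> 'b balg \<Rightarrow> bool" where
  "is_iso h A A' \<longleftrightarrow> bij_betw h (carrier A) (carrier A') \<and>
     (\<forall>a\<in>carrier A. \<forall>b\<in>carrier A.
        h (meet A a b) = meet A' (h a) (h b) \<and> h (join A a b) = join A' (h a) (h b)) \<and>
     (\<forall>a\<in>carrier A. h (neg A a) = neg A' (h a) \<and> h (jay A a) = jay A' (h a)) \<and>
     h (zero A) = zero A' \<and> h (one A) = one A'"

end

theory Submission
  imports Defs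
begin

text \<open>Fix an embedding of \<open>A\<close> into a power of \<open>WK\<^sup>e\<close>. An element lies in the bottom
  fibre iff none of its coordinates is \<open>1/2\<close>, and the index \<open>i = J\<^sub>2(1\<^sub>k)\<close> of a fibre
  \<open>A\<^sub>k\<close> is the Boolean element that is \<open>1\<close> exactly where \<open>A\<^sub>k\<close> is not \<open>1/2\<close>.
  So \<open>a/[i)\<close> can be sent to the element of \<open>A\<close> whose coordinates are those of \<open>a\<close> where
  \<open>i\<close> is \<open>1\<close> and \<open>1/2\<close> elsewhere, namely \<open>a \<and> 1\<^sub>k\<close>. This map is well defined and
  injective because the coordinates of \<open>a\<close> only matter where \<open>i\<close> is \<open>1\<close>, surjective
  because \<open>b\<close> is the image of \<open>J\<^sub>2(b)/[J\<^sub>2(b \<or> \<not>b))\<close>, and a homomorphism because all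
  of this is a coordinatewise computation in \<open>WK\<^sup>e\<close>.\<close>

text \<open>The coordinate of \<open>a/[i)\<close> in terms of those of \<open>i\<close> and \<open>a\<close>.\<close>
definition wk_mask :: "wk \<Rightarrow> wk \<Rightarrow> wk" where
  "wk_mask i w = (if i = WO then w else WH)"

lemma wk_mask_WO [simp]: "wk_mask WO w = w"
  by (simp add: wk_mask_def)

lemma wk_mask_meet_index: "wk_mask i (wk_meet w i) = wk_mask i w"
  by (cases i; cases w) (simp_all add: wk_mask_def)

lemma wk_meet_mask: "wk_meet (wk_mask i a) (wk_mask j b) = wk_mask (wk_meet i j) (wk_meet a b)"
  by (cases i; cases j; cases a; cases b) (simp_all add: wk_mask_def)

lemma wk_join_mask: "wk_join (wk_mask i a) (wk_mask j b) = wk_mask (wk_meet i j) (wk_join a b)"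
  by (cases i; cases j; cases a; cases b) (simp_all add: wk_mask_def)

lemma wk_neg_mask: "wk_neg (wk_mask i a) = wk_mask i (wk_neg a)"
  by (cases i; cases a) (simp_all add: wk_mask_def)

lemma wk_J2_mask: "i \<noteq> WH \<Longrightarrow> a \<noteq> WH \<Longrightarrow> wk_J2 (wk_mask i a) = wk_meet a i"
  by (cases i; cases a) (simp_all add: wk_mask_def)

lemma wk_meet_mask_WO: "a \<noteq> WH \<Longrightarrow> wk_meet a (wk_mask i WO) = wk_mask i a"
  by (cases i; cases a) (simp_all add: wk_mask_def)

lemma wk_mask_eqD:
  assumes "i \<noteq> WH" "j \<noteq> WH" "a \<noteq> WH" "b \<noteq> WH" "wk_mask i a = wk_mask j b"
  shows "i = j" "wk_meet a i = wk_meet b i"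
  using assms by (cases i; cases j; cases a; cases b; simp add: wk_mask_def)+

lemma wk_mask_J2: "wk_mask (wk_J2 (wk_join w (wk_neg w))) (wk_J2 w) = w"
  by (cases w) (simp_all add: wk_mask_def)

lemma wk_join_neg_eq_WO_iff: "wk_join w (wk_neg w) = WO \<longleftrightarrow> w \<noteq> WH"
  by (cases w) simp_all

lemma wk_meet_neq_WH: "a \<noteq> WH \<Longrightarrow> b \<noteq> WH \<Longrightarrow> wk_meet a b \<noteq> WH"
  by (cases a; cases b) simp_all

lemma wk_join_neq_WH: "a \<noteq> WH \<Longrightarrow> b \<noteq> WH \<Longrightarrow> wk_join a b \<noteq> WH"
  by (cases a; cases b) simp_all

lemma wk_neg_neq_WH: "a \<noteq> WH \<Longrightarrow> wk_neg a \<noteq> WH"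
  by (cases a) simp_all

lemma wk_J2_neq_WH [simp]: "wk_J2 a \<noteq> WH"
  by (cases a) simp_all

lemma fst_system_of_simps [simp]:
  "bcarrier (fst (system_of A)) = bottom_fibre A"
  "bmeet (fst (system_of A)) = meet A" "bjoin (fst (system_of A)) = join A"
  "bneg (fst (system_of A)) = neg A"
  "bzero (fst (system_of A)) = zero A" "bone (fst (system_of A)) = one A"
  by (simp_all add: system_of_def)

lemma snd_system_of: "snd (system_of A) = (\<lambda>a. jay A (fibre_top A a)) ` carrier A"
  by (auto simp: system_of_def)

lemma alg_of_system_simps:
  "carrier (alg_of_system S) = {(i, filt_class (fst S) i a) | i a. i \<in> snd S \<and> a \<in> bcarrier (fst S)}"
  "meet (alg_of_system S) (i, C) (j, D) =
     (bmeet (fst S) i j, filt_class (fst S) (bmeet (fst S) i j) (bmeet (fst S) (rep C) (rep D)))"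
  "join (alg_of_system S) (i, C) (j, D) =
     (bmeet (fst S) i j, filt_class (fst S) (bmeet (fst S) i j) (bjoin (fst S) (rep C) (rep D)))"
  "neg (alg_of_system S) (i, C) = (i, filt_class (fst S) i (bneg (fst S) (rep C)))"
  "jay (alg_of_system S) (i, C) =
     (bone (fst S), filt_class (fst S) (bone (fst S)) (bmeet (fst S) (rep C) i))"
  "zero (alg_of_system S) = (bone (fst S), filt_class (fst S) (bone (fst S)) (bzero (fst S)))"
  "one (alg_of_system S) = (bone (fst S), filt_class (fst S) (bone (fst S)) (bone (fst S)))"
  by (simp_all add: alg_of_system_def Let_def)

lemma rep_filt_class:
  assumes "a \<in> bcarrier B"
  shows "rep (filt_class B i a) \<in> filt_class B i a"
proof -
  have "a \<in> filt_class B i a"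
    using assms by (simp add: filt_class_def)
  then show ?thesis
    unfolding rep_def by (rule someI)
qed

locale bochvar_embedding =
  fixes A :: "'a balg" and X :: "'x set" and e :: "'a \<Rightarrow> 'x \<Rightarrow> wk"
  assumes algebra: "is_algebra A" and embedding: "embeds_into_power A X e"
begin

lemma carrier_closed [simp]:
  "zero A \<in> carrier A" "one A \<in> carrier A"
  "a \<in> carrier A \<Longrightarrow> b \<in> carrier A \<Longrightarrow> meet A a b \<in> carrier A"
  "a \<in> carrier A \<Longrightarrow> b \<in> carrier A \<Longrightarrow> join A a b \<in> carrier A"
  "a \<in> carrier A \<Longrightarrow> neg A a \<in> carrier A"
  "a \<in> carrier A \<Longrightarrow> jay A a \<in> carrier A"
  using algebra unfolding is_algebra_def by blast+

lemma coord_ops [simp]: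
  "x \<in> X \<Longrightarrow> e (zero A) x = WZ" "x \<in> X \<Longrightarrow> e (one A) x = WO"
  "a \<in> carrier A \<Longrightarrow> b \<in> carrier A \<Longrightarrow> x \<in> X \<Longrightarrow> e (meet A a b) x = wk_meet (e a x) (e b x)"
  "a \<in> carrier A \<Longrightarrow> b \<in> carrier A \<Longrightarrow> x \<in> X \<Longrightarrow> e (join A a b) x = wk_join (e a x) (e b x)"
  "a \<in> carrier A \<Longrightarrow> x \<in> X \<Longrightarrow> e (neg A a) x = wk_neg (e a x)"
  "a \<in> carrier A \<Longrightarrow> x \<in> X \<Longrightarrow> e (jay A a) x = wk_J2 (e a x)"
  using embedding unfolding embeds_into_power_def by blast+

lemma eq_by_coords:
  "a \<in> carrier A \<Longrightarrow> b \<in> carrier A \<Longrightarrow> (\<And>x. x \<in> X \<Longrightarrow> e a x = e b x) \<Longrightarrow> a = b"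
  using embedding unfolding embeds_into_power_def by blast

lemma fibre_top_closed [simp]: "a \<in> carrier A \<Longrightarrow> fibre_top A a \<in> carrier A"
  by (simp add: fibre_top_def)

lemma coord_fibre_top [simp]:
  "a \<in> carrier A \<Longrightarrow> x \<in> X \<Longrightarrow> e (fibre_top A a) x = wk_join (e a x) (wk_neg (e a x))"
  by (simp add: fibre_top_def)

lemma bottom_fibre_iff: "a \<in> bottom_fibre A \<longleftrightarrow> a \<in> carrier A \<and> (\<forall>x\<in>X. e a x \<noteq> WH)"
proof -
  have "fibre_top A a = one A \<longleftrightarrow> (\<forall>x\<in>X. e (fibre_top A a) x = e (one A) x)"
    if "a \<in> carrier A"
    using that eq_by_coords[of "fibre_top A a" "one A"] by (auto simp del: coord_fibre_top coord_ops)
  then show ?thesis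
    by (auto simp: bottom_fibre_def wk_join_neg_eq_WO_iff)
qed

lemma coord_bottom_fibre: "a \<in> bottom_fibre A \<Longrightarrow> x \<in> X \<Longrightarrow> e a x \<noteq> WH"
  by (simp add: bottom_fibre_iff)

lemma bottom_fibre_carrier: "a \<in> bottom_fibre A \<Longrightarrow> a \<in> carrier A"
  by (simp add: bottom_fibre_iff)

lemma
  shows zero_in_bottom_fibre: "zero A \<in> bottom_fibre A"
    and one_in_bottom_fibre: "one A \<in> bottom_fibre A"
    and meet_in_bottom_fibre: "a \<in> bottom_fibre A \<Longrightarrow> b \<in> bottom_fibre A \<Longrightarrow> meet A a b \<in> bottom_fibre A"
    and join_in_bottom_fibre: "a \<in> bottom_fibre A \<Longrightarrow> b \<in> bottom_fibre A \<Longrightarrow> join A a b \<in> bottom_fibre A"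
    and neg_in_bottom_fibre: "a \<in> bottom_fibre A \<Longrightarrow> neg A a \<in> bottom_fibre A"
    and jay_in_bottom_fibre: "a \<in> carrier A \<Longrightarrow> jay A a \<in> bottom_fibre A"
  by (auto simp: bottom_fibre_iff wk_meet_neq_WH wk_join_neq_WH wk_neg_neq_WH)

abbreviation index_set :: "'a set" where
  "index_set \<equiv> snd (system_of A)"

abbreviation cls :: "'a \<Rightarrow> 'a \<Rightarrow> 'a set" where
  "cls \<equiv> filt_class (fst (system_of A))"

lemma index_in_bottom_fibre: "i \<in> index_set \<Longrightarrow> i \<in> bottom_fibre A"
  by (auto simp: snd_system_of jay_in_bottom_fibre)

lemma one_in_index_set: "one A \<in> index_set"
proof -
  have "jay A (fibre_top A (one A)) = one A"
    by (rule eq_by_coords) auto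
  then show ?thesis
    unfolding snd_system_of by (metis carrier_closed(2) image_eqI)
qed

lemma meet_in_index_set:
  assumes "i \<in> index_set" "j \<in> index_set"
  shows "meet A i j \<in> index_set"
proof -
  obtain a b where ab: "a \<in> carrier A" "b \<in> carrier A"
    and i: "i = jay A (fibre_top A a)" and j: "j = jay A (fibre_top A b)"
    using assms unfolding snd_system_of by blast
  have "meet A i j = jay A (fibre_top A (meet A a b))"
  proof (rule eq_by_coords)
    fix x assume "x \<in> X"
    then show "e (meet A i j) x = e (jay A (fibre_top A (meet A a b))) x"
      using ab unfolding i j by (cases "e a x"; cases "e b x") simp_all
  qed (use ab in \<open>simp_all add: i j\<close>)
  then show ?thesis
    unfolding snd_system_of using ab by simp
qed

text \<open>Every preimage of \<open>i\<close> has the same fibre top (\<open>coord_index_top\<close>), so the choice is harmless.\<close>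
definition index_top :: "'a \<Rightarrow> 'a" where
  "index_top i = fibre_top A (inv_into (carrier A) (\<lambda>a. jay A (fibre_top A a)) i)"

lemma index_top_closed: "i \<in> index_set \<Longrightarrow> index_top i \<in> carrier A"
  by (simp add: index_top_def snd_system_of fibre_top_def inv_into_into)

lemma coord_index_top:
  assumes "i \<in> index_set" "x \<in> X"
  shows "e (index_top i) x = wk_mask (e i x) WO"
proof -
  define b where "b = inv_into (carrier A) (\<lambda>a. jay A (fibre_top A a)) i"
  have "b \<in> carrier A" "i = jay A (fibre_top A b)"
    using assms(1) unfolding b_def snd_system_of by (auto intro: inv_into_into f_inv_into_f[symmetric])
  with assms(2) show ?thesis
    unfolding index_top_def b_def[symmetric] by (cases "e b x") (simp_all add: wk_mask_def)
qed

definition from_system :: "'a \<times> 'a set \<Rightarrow> 'a" where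
  "from_system = (\<lambda>(i, C). meet A (rep C) (index_top i))"

lemma from_system_closed:
  assumes "i \<in> index_set" "a \<in> bottom_fibre A"
  shows "from_system (i, cls i a) \<in> carrier A"
  using rep_filt_class[of a "fst (system_of A)" i] assms index_top_closed
  by (auto simp: from_system_def filt_class_def bottom_fibre_carrier)

lemma coord_from_system:
  assumes i: "i \<in> index_set" and a: "a \<in> bottom_fibre A" and x: "x \<in> X"
  shows "e (from_system (i, cls i a)) x = wk_mask (e i x) (e a x)"
proof -
  let ?c = "rep (cls i a)"
  have "?c \<in> cls i a"
    using rep_filt_class[of a "fst (system_of A)" i] a by simp
  then have c: "?c \<in> bottom_fibre A" and c_meet: "meet A ?c i = meet A a i"
    by (simp_all add: filt_class_def)
  have "e (from_system (i, cls i a)) x = wk_mask (e i x) (e ?c x)"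
    using c i x index_top_closed
    by (simp add: from_system_def coord_index_top wk_meet_mask_WO coord_bottom_fibre
        bottom_fibre_carrier)
  also have "\<dots> = wk_mask (e i x) (wk_meet (e ?c x) (e i x))"
    by (simp add: wk_mask_meet_index)
  also have "\<dots> = wk_mask (e i x) (wk_meet (e a x) (e i x))"
    using c_meet a c i x index_in_bottom_fibre coord_ops(3) bottom_fibre_carrier by metis
  also have "\<dots> = wk_mask (e i x) (e a x)"
    by (simp add: wk_mask_meet_index)
  finally show ?thesis .
qed

text \<open>Taking the representative as the generator of the class makes \<open>rep\<close> in the operations
  of \<open>alg_of_system\<close> disappear.\<close>
lemma alg_of_system_elemE:
  assumes "p \<in> carrier (alg_of_system (system_of A))"
  obtains i c where "p = (i, cls i c)" "i \<in> index_set" "c \<in> bottom_fibre A" "rep (cls i c) = c"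
proof -
  obtain i a where p: "p = (i, cls i a)" and i: "i \<in> index_set" and a: "a \<in> bottom_fibre A"
    using assms by (auto simp: alg_of_system_simps)
  let ?c = "rep (cls i a)"
  have "?c \<in> cls i a"
    using rep_filt_class[of a "fst (system_of A)" i] a by simp
  then have "?c \<in> bottom_fibre A" "cls i ?c = cls i a"
    by (auto simp: filt_class_def)
  with p i show thesis
    using that[of i ?c] by simp
qed

lemma inj_on_from_system: "inj_on from_system (carrier (alg_of_system (system_of A)))"
proof (rule inj_onI)
  fix p q
  assume "p \<in> carrier (alg_of_system (system_of A))" "q \<in> carrier (alg_of_system (system_of A))"
    and eq: "from_system p = from_system q"
  then obtain i a j b where p: "p = (i, cls i a)" and q: "q = (j, cls j b)"
    and i: "i \<in> index_set" and j: "j \<in> index_set"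
    and a: "a \<in> bottom_fibre A" and b: "b \<in> bottom_fibre A"
    by (metis alg_of_system_elemE)
  have mask_eq: "wk_mask (e i x) (e a x) = wk_mask (e j x) (e b x)" if "x \<in> X" for x
    using eq coord_from_system[OF i a that] coord_from_system[OF j b that] by (simp add: p q)
  have non_half: "e i x \<noteq> WH" "e j x \<noteq> WH" "e a x \<noteq> WH" "e b x \<noteq> WH" if "x \<in> X" for x
    using that i j a b index_in_bottom_fibre coord_bottom_fibre by blast+
  have "i = j"
    using i j wk_mask_eqD(1)[OF non_half mask_eq]
    by (intro eq_by_coords) (simp_all add: index_in_bottom_fibre bottom_fibre_carrier)
  moreover have "meet A a i = meet A b i"
    using i a b wk_mask_eqD(2)[OF non_half mask_eq]
    by (intro eq_by_coords) (simp_all add: index_in_bottom_fibre bottom_fibre_carrier)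
  ultimately show "p = q"
    by (simp add: p q filt_class_def)
qed

lemma from_system_image: "from_system ` carrier (alg_of_system (system_of A)) = carrier A"
proof
  show "from_system ` carrier (alg_of_system (system_of A)) \<subseteq> carrier A"
    by (auto elim: alg_of_system_elemE simp: from_system_closed)
next
  show "carrier A \<subseteq> from_system ` carrier (alg_of_system (system_of A))"
  proof
    fix y assume y: "y \<in> carrier A"
    let ?i = "jay A (fibre_top A y)"
    have i: "?i \<in> index_set" and a: "jay A y \<in> bottom_fibre A"
      using y by (simp_all add: snd_system_of jay_in_bottom_fibre)
    have "y = from_system (?i, cls ?i (jay A y))"
      using y from_system_closed[OF i a]
      by (intro eq_by_coords) (simp_all add: coord_from_system[OF i a] wk_mask_J2)
    moreover have "(?i, cls ?i (jay A y)) \<in> carrier (alg_of_system (system_of A))"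
      using i a by (auto simp: alg_of_system_simps)
    ultimately show "y \<in> from_system ` carrier (alg_of_system (system_of A))"
      by blast
  qed
qed

lemma from_system_meet_join:
  assumes "p \<in> carrier (alg_of_system (system_of A))" "q \<in> carrier (alg_of_system (system_of A))"
  shows "from_system (meet (alg_of_system (system_of A)) p q) = meet A (from_system p) (from_system q)"
    and "from_system (join (alg_of_system (system_of A)) p q) = join A (from_system p) (from_system q)"
proof -
  obtain i c j d where p: "p = (i, cls i c)" and q: "q = (j, cls j d)"
    and i: "i \<in> index_set" and j: "j \<in> index_set" and ij: "meet A i j \<in> index_set"
    and c: "c \<in> bottom_fibre A" and d: "d \<in> bottom_fibre A"
    and rep_c: "rep (cls i c) = c" and rep_d: "rep (cls j d) = d"
    using assms by (metis alg_of_system_elemE meet_in_index_set)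
  have closed: "from_system p \<in> carrier A" "from_system q \<in> carrier A"
    using from_system_closed i j c d by (simp_all add: p q)
  show "from_system (meet (alg_of_system (system_of A)) p q) = meet A (from_system p) (from_system q)"
    using closed c d i j meet_in_bottom_fibre[OF c d]
    by (intro eq_by_coords)
      (simp_all add: p q rep_c rep_d alg_of_system_simps from_system_closed[OF ij]
        coord_from_system[OF ij] coord_from_system[OF i] coord_from_system[OF j]
        bottom_fibre_carrier index_in_bottom_fibre wk_meet_mask)
  show "from_system (join (alg_of_system (system_of A)) p q) = join A (from_system p) (from_system q)"
    using closed c d i j join_in_bottom_fibre[OF c d]
    by (intro eq_by_coords)
      (simp_all add: p q rep_c rep_d alg_of_system_simps from_system_closed[OF ij]
        coord_from_system[OF ij] coord_from_system[OF i] coord_from_system[OF j]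
        bottom_fibre_carrier index_in_bottom_fibre wk_join_mask)
qed

lemma from_system_neg_jay:
  assumes "p \<in> carrier (alg_of_system (system_of A))"
  shows "from_system (neg (alg_of_system (system_of A)) p) = neg A (from_system p)"
    and "from_system (jay (alg_of_system (system_of A)) p) = jay A (from_system p)"
proof -
  obtain i c where p: "p = (i, cls i c)" and i: "i \<in> index_set" and c: "c \<in> bottom_fibre A"
    and rep_c: "rep (cls i c) = c"
    using assms by (metis alg_of_system_elemE)
  have closed: "from_system p \<in> carrier A"
    using from_system_closed i c by (simp add: p)
  have ci: "meet A c i \<in> bottom_fibre A"
    using meet_in_bottom_fibre[OF c index_in_bottom_fibre[OF i]] .
  show "from_system (neg (alg_of_system (system_of A)) p) = neg A (from_system p)"
    using closed c neg_in_bottom_fibre[OF c]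
    by (intro eq_by_coords)
      (simp_all add: p rep_c alg_of_system_simps from_system_closed[OF i]
        coord_from_system[OF i] wk_neg_mask bottom_fibre_carrier)
  show "from_system (jay (alg_of_system (system_of A)) p) = jay A (from_system p)"
    using closed c ci i
    by (intro eq_by_coords)
      (simp_all add: p rep_c alg_of_system_simps from_system_closed[OF one_in_index_set]
        coord_from_system[OF one_in_index_set] coord_from_system[OF i] wk_J2_mask
        coord_bottom_fibre index_in_bottom_fibre bottom_fibre_carrier)
qed

lemma from_system_zero_one:
  "from_system (zero (alg_of_system (system_of A))) = zero A"
  "from_system (one (alg_of_system (system_of A))) = one A"
  using from_system_closed[OF one_in_index_set] zero_in_bottom_fibre one_in_bottom_fibre
  by (auto intro!: eq_by_coords simp: alg_of_system_simps coord_from_system[OF one_in_index_set])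

lemma is_iso_from_system: "is_iso from_system (alg_of_system (system_of A)) A"
  unfolding is_iso_def bij_betw_def
  using inj_on_from_system from_system_image from_system_meet_join from_system_neg_jay
    from_system_zero_one
  by blast

end

theorem theorem3p5:
  fixes A :: "'a balg"
  assumes "bochvar_algebra A"
  shows "\<exists>h. is_iso h (alg_of_system (system_of A)) A"
proof -
  obtain X :: "('a \<Rightarrow> wk) set" and e where "is_algebra A" "embeds_into_power A X e"
    using assms unfolding bochvar_algebra_def by blast
  then interpret bochvar_embedding A X e
    by unfold_locales
  show ?thesis
    using is_iso_from_system by blast
qed

end
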